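(* With $h$ as defined in the context, for every $x\in(-2,\infty)$, \[1<h(x)<\left(\frac{x+3}{x+2}\right)^2.\]
   Context: Let $u_n=(-1)^{s_2(n)}$, where $s_2(n)$ is the sum of the binary digits of the non-negative integer $n$ (Thue–Morse sequence with values $\pm1$). For real $x>-2$ define $h(x)=\prod_{n=1}^\infty\left(\frac{2n+x}{2n+1+x}\right)^{u_n}$ (limit of partial products; it converges). *)

theory Defs
  imports "HOL-Analysis.Analysis"
begin

fun bin_digit_sum :: "nat \<Rightarrow> nat" where
  "bin_digit_sum n = (if n = 0 then 0 else n mod 2 + bin_digit_sum (n div 2))"

definition tm :: "nat \<Rightarrow> int" where
  "tm n = (-1) ^ bin_digit_sum n"

definition h_partial :: "real \<Rightarrow> nat \<Rightarrow> real" where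
  "h_partial x N = (\<Prod>n\<in>{1..N}. ((2 * real n + x) / (2 * real n + 1 + x)) powi tm n)"

definition h :: "real \<Rightarrow> real" where
  "h x = lim (h_partial x)"

end

theory Submission
  imports Defs "HOL-Real_Asymp.Real_Asymp" "HOL-Probability.Characteristic_Functions"
begin

text \<open>
  Write \<open>c\<^sub>n = ln ((2n+1+x)/(2n+x))\<close>, so that \<open>h x = exp (- \<Sum> u\<^sub>n c\<^sub>n)\<close> with \<open>c\<^sub>n\<close>
  decreasing and tending to 0. Since \<open>u\<^sub>2\<^sub>m = u\<^sub>m\<close> and \<open>u\<^sub>2\<^sub>m\<^sub>+\<^sub>1 = -u\<^sub>m\<close>, grouping
  the terms after \<open>u\<^sub>1 c\<^sub>1 = -c\<^sub>1\<close> in pairs gives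
  \<open>\<Sum> u\<^sub>n c\<^sub>n = -c\<^sub>1 + \<Sum>\<^sub>m u\<^sub>m\<^sub>+\<^sub>1 (c\<^sub>2\<^sub>m\<^sub>+\<^sub>2 - c\<^sub>2\<^sub>m\<^sub>+\<^sub>3)\<close>, and the last series is dominated by the
  telescoping series \<open>\<Sum>\<^sub>m (c\<^sub>2\<^sub>m\<^sub>+\<^sub>2 - c\<^sub>2\<^sub>m\<^sub>+\<^sub>4) = c\<^sub>2\<close>. Hence \<open>ln h x\<close> lies within \<open>c\<^sub>2\<close>
  of \<open>c\<^sub>1 = ln ((x+3)/(x+2))\<close>, and \<open>c\<^sub>2 < c\<^sub>1\<close> gives both bounds.
\<close>

declare bin_digit_sum.simps [simp del]

lemma bin_digit_sum_0 [simp]: "bin_digit_sum 0 = 0"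
  by (subst bin_digit_sum.simps) simp

lemma bin_digit_sum_double: "bin_digit_sum (2 * k) = bin_digit_sum k"
  by (cases "k = 0") (simp_all add: bin_digit_sum.simps[of "2 * k"])

lemma bin_digit_sum_double_Suc: "bin_digit_sum (2 * k + 1) = bin_digit_sum k + 1"
  by (subst bin_digit_sum.simps) simp

lemma tm_double: "tm (2 * k) = tm k"
  by (simp add: tm_def bin_digit_sum_double)

lemma tm_double_Suc: "tm (2 * k + 1) = - tm k"
  unfolding tm_def bin_digit_sum_double_Suc by simp

lemma tm_one: "tm 1 = -1"
  using tm_double_Suc[of 0] by (simp add: tm_def)

lemma abs_tm: "\<bar>real_of_int (tm n)\<bar> = 1"
  by (simp add: tm_def)

lemma telescoping_bound_summable:
  fixes e f :: "nat \<Rightarrow> real"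
  assumes "f \<longlonglongrightarrow> 0" and bound: "\<And>m. \<bar>e m\<bar> \<le> f m - f (Suc m)"
  shows "summable e" and "\<bar>suminf e\<bar> \<le> f 0"
proof -
  have tel: "(\<lambda>m. f m - f (Suc m)) sums f 0"
    using telescope_sums'[OF assms(1)] by simp
  have abs_summable: "summable (\<lambda>m. \<bar>e m\<bar>)"
    using summable_rabs_comparison_test[OF _ sums_summable[OF tel]] bound by blast
  then show "summable e"
    by (rule summable_rabs_cancel)
  have "\<bar>suminf e\<bar> \<le> (\<Sum>m. \<bar>e m\<bar>)"
    by (rule summable_rabs[OF abs_summable])
  also have "\<dots> \<le> (\<Sum>m. f m - f (Suc m))"
    by (rule suminf_le[OF bound abs_summable sums_summable[OF tel]])
  also have "\<dots> = f 0"
    using tel sums_unique by metis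
  finally show "\<bar>suminf e\<bar> \<le> f 0" .
qed

lemma tm_weighted_sum_odd:
  fixes c :: "nat \<Rightarrow> real"
  shows "(\<Sum>n\<in>{1..2 * M + 1}. real_of_int (tm n) * c n)
    = - c 1 + (\<Sum>m<M. real_of_int (tm (m + 1)) * (c (2 * m + 2) - c (2 * m + 3)))"
proof (induction M)
  case 0
  show ?case
    using tm_one by simp
next
  case (Suc M)
  have "2 * M + 2 = 2 * (M + 1)" "2 * M + 3 = 2 * (M + 1) + 1"
    by simp_all
  then have "tm (2 * M + 2) = tm (M + 1)" "tm (2 * M + 3) = - tm (M + 1)"
    by (simp_all only: tm_double tm_double_Suc)
  moreover have "(\<Sum>n\<in>{1..2 * Suc M + 1}. real_of_int (tm n) * c n)
    = (\<Sum>n\<in>{1..2 * M + 1}. real_of_int (tm n) * c n)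
      + real_of_int (tm (2 * M + 2)) * c (2 * M + 2) + real_of_int (tm (2 * M + 3)) * c (2 * M + 3)"
    by (simp add: numeral_eq_Suc)
  ultimately show ?case
    using Suc by (simp add: algebra_simps)
qed

text \<open>
  Monotonicity is assumed only from \<open>n = 1\<close> on, since \<open>log_factor x 0\<close> below is meaningless
  for \<open>x \<le> 0\<close>.
\<close>

lemma tm_weighted_sum_tendsto:
  fixes c :: "nat \<Rightarrow> real"
  assumes decreasing: "\<And>n. n \<ge> 1 \<Longrightarrow> c (Suc n) \<le> c n" and "c \<longlonglongrightarrow> 0"
  obtains L where "(\<lambda>N. \<Sum>n\<in>{1..N}. real_of_int (tm n) * c n) \<longlonglongrightarrow> L"
    and "\<bar>L + c 1\<bar> \<le> c 2"
proof -
  define S where "S N = (\<Sum>n\<in>{1..N}. real_of_int (tm n) * c n)" for N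
  define e where "e m = real_of_int (tm (m + 1)) * (c (2 * m + 2) - c (2 * m + 3))" for m
  have c_even_tendsto: "(\<lambda>m. c (2 * m + 2)) \<longlonglongrightarrow> 0"
    and c_odd_tendsto: "(\<lambda>m. c (2 * m + 1)) \<longlonglongrightarrow> 0"
    by (auto intro!: LIMSEQ_subseq_LIMSEQ[OF \<open>c \<longlonglongrightarrow> 0\<close>, unfolded o_def] simp: strict_mono_def)
  have "\<bar>e m\<bar> \<le> c (2 * m + 2) - c (2 * Suc m + 2)" for m
  proof -
    have "c (2 * m + 3) \<le> c (2 * m + 2)" "c (2 * m + 4) \<le> c (2 * m + 3)"
      using decreasing[of "2 * m + 2"] decreasing[of "2 * m + 3"] by (simp_all add: numeral_eq_Suc)
    then show ?thesis
      by (simp add: e_def abs_mult abs_tm numeral_eq_Suc)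
  qed
  from telescoping_bound_summable[where f = "\<lambda>m. c (2 * m + 2)", OF c_even_tendsto this]
  have "summable e" and D_bound: "\<bar>suminf e\<bar> \<le> c 2"
    by (simp_all add: numeral_2_eq_2)
  define L where "L = - c 1 + suminf e"
  have odd_tendsto: "(\<lambda>M. S (2 * M + 1)) \<longlonglongrightarrow> L"
    unfolding S_def tm_weighted_sum_odd e_def[symmetric] L_def
    by (intro tendsto_add tendsto_const summable_LIMSEQ \<open>summable e\<close>)
  have "(\<lambda>M. \<bar>real_of_int (tm (2 * M + 1)) * c (2 * M + 1)\<bar>) = (\<lambda>M. \<bar>c (2 * M + 1)\<bar>)"
    by (simp add: abs_mult abs_tm)
  then have "(\<lambda>M. \<bar>real_of_int (tm (2 * M + 1)) * c (2 * M + 1)\<bar>) \<longlonglongrightarrow> 0"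
    using tendsto_rabs_zero[OF c_odd_tendsto] by simp
  then have "(\<lambda>M. real_of_int (tm (2 * M + 1)) * c (2 * M + 1)) \<longlonglongrightarrow> 0"
    by (rule tendsto_rabs_zero_cancel)
  with odd_tendsto
  have "(\<lambda>M. S (2 * M + 1) - real_of_int (tm (2 * M + 1)) * c (2 * M + 1)) \<longlonglongrightarrow> L - 0"
    by (rule tendsto_diff)
  then have even_tendsto: "(\<lambda>M. S (2 * M)) \<longlonglongrightarrow> L"
    by (simp add: S_def)
  have "S \<longlonglongrightarrow> L"
    by (rule limseq_even_odd[OF even_tendsto odd_tendsto])
  moreover have "\<bar>L + c 1\<bar> \<le> c 2"
    using D_bound by (simp add: L_def)
  ultimately show ?thesis
    using that unfolding S_def by blast
qed

definition log_factor :: "real \<Rightarrow> nat \<Rightarrow> real" where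
  "log_factor x n = ln ((2 * real n + 1 + x) / (2 * real n + x))"

lemma log_factor_decreasing:
  assumes "x > -2" "n \<ge> 1"
  shows "log_factor x (Suc n) \<le> log_factor x n"
proof -
  have pos: "2 * real n + x > 0"
    using assms by auto
  then have "(2 * real n + 3 + x) / (2 * real n + 2 + x) \<le> (2 * real n + 1 + x) / (2 * real n + x)"
    by (simp add: divide_simps) (simp add: algebra_simps)
  with pos show ?thesis
    by (simp add: log_factor_def algebra_simps)
qed

lemma log_factor_2_less_1:
  assumes "x > -2"
  shows "log_factor x 2 < log_factor x 1"
proof -
  have "(5 + x) / (4 + x) < (3 + x) / (2 + x)"
    using assms by (simp add: divide_simps) (simp add: algebra_simps)
  with assms show ?thesis
    by (simp add: log_factor_def algebra_simps)
qed

lemma log_factor_tendsto_0: "log_factor x \<longlonglongrightarrow> 0"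
  unfolding log_factor_def by real_asymp

lemma h_partial_eq_exp:
  assumes "x > -2"
  shows "h_partial x N = exp (- (\<Sum>n\<in>{1..N}. real_of_int (tm n) * log_factor x n))"
proof -
  have "((2 * real n + x) / (2 * real n + 1 + x)) powi tm n
      = exp (- (real_of_int (tm n) * log_factor x n))" if "n \<ge> 1" for n
  proof -
    have pos: "2 * real n + x > 0"
      using assms that by auto
    then have "(2 * real n + x) / (2 * real n + 1 + x) = exp (- log_factor x n)"
      by (simp add: log_factor_def exp_minus)
    then show ?thesis
      by (simp add: exp_power_int)
  qed
  then show ?thesis
    by (simp add: h_partial_def exp_sum[symmetric] sum_negf)
qed

theorem theorem3:
  fixes x :: real
  assumes "x > -2"
  shows "1 < h x \<and> h x < ((x + 3) / (x + 2))^2"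
proof -
  let ?c = "log_factor x"
  obtain L where sum_tendsto: "(\<lambda>N. \<Sum>n\<in>{1..N}. real_of_int (tm n) * ?c n) \<longlonglongrightarrow> L"
    and L_bound: "\<bar>L + ?c 1\<bar> \<le> ?c 2"
    using tm_weighted_sum_tendsto[OF log_factor_decreasing[OF assms] log_factor_tendsto_0] .
  have "h_partial x \<longlonglongrightarrow> exp (- L)"
    unfolding h_partial_eq_exp[OF assms] by (intro tendsto_exp tendsto_minus sum_tendsto)
  then have h_eq: "h x = exp (- L)"
    by (simp add: h_def limI)
  have c1: "exp (?c 1) = (x + 3) / (x + 2)"
    using assms by (simp add: log_factor_def algebra_simps)
  have "0 < - L" "- L < 2 * ?c 1"
    using L_bound log_factor_2_less_1[OF assms] by linarith+
  then have "1 < h x" "h x < exp (?c 1) ^ 2"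
    by (simp_all add: h_eq exp_double[symmetric] mult.commute)
  then show ?thesis
    using c1 by simp
qed

end
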